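(* Let $X=\mathrm{Bl}_{x_0}\mathbb{P}^2$ with hyperplane class $H$ and exceptional divisor $E$, $b>1$, $\beta=b[H]-[E]$, $p\in\mathbb{R}$, and for $s<pb$ let $\tilde\alpha_s=p[H]-s[E]$ and $\tilde c_s=\frac{p^2-s^2-b^2+1}{2(pb-s)}=\frac{\tilde\alpha_s^2-\beta^2}{2\tilde\alpha_s\cdot\beta}$. Then $$\tilde c_s<\min\Big(\frac pb,\ \frac{p-s}{b-1},\ bp\Big).$$ In particular: (1) $\tilde\alpha_s-\tilde c_s\beta$ is a big class, and it is Kähler (resp. nef) if and only if $s>\tilde c_s$ (resp. $s\ge\tilde c_s$); (2) $(X,\tilde\alpha_s,\beta)$ is dHYM-stable (resp. semi-stable) if and only if $s>\tilde c_s$ (resp. $s\ge\tilde c_s$).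
   Context: For a class $\alpha$ with $\alpha\cdot\beta\neq0$ the dHYM angle satisfies $\cot\vartheta=\frac{\alpha^2-\beta^2}{2\alpha\cdot\beta}$. $(X,\alpha,\beta)$ is dHYM-stable if for every Kähler class $\gamma$ and $k=1,2$, $\mathrm{Re}(\alpha+\sqrt{-1}\beta)^k\cdot\gamma^{2-k}\ge\cot\vartheta\,\mathrm{Im}(\alpha+\sqrt{-1}\beta)^k\cdot\gamma^{2-k}$, and for every curve $Z$, $\mathrm{Re}(\alpha+\sqrt{-1}\beta)\cdot Z>\cot\vartheta\,\mathrm{Im}(\alpha+\sqrt{-1}\beta)\cdot Z$; dHYM-semi-stable is the same with all inequalities non-strict. *)

theory Defs
  imports "HOL-Analysis.Product_Vector"
begin

text \<open>Model of the real Neron--Severi space H^{1,1}(X,R) of X = Bl_{x0} P^2.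
  It is 2-dimensional with basis [H], [E]; a class is the pair (a, e)
  standing for a[H] + e[E].  Intersection form: H.H = 1, E.E = -1, H.E = 0.\<close>

type_synonym cls = "real \<times> real"

definition clsH :: cls where "clsH = (1, 0)"
definition clsE :: cls where "clsE = (0, 1)"

definition inter :: "cls \<Rightarrow> cls \<Rightarrow> real" where
  "inter x y = fst x * fst y - snd x * snd y"

definition kahler :: "cls \<Rightarrow> bool" where
  "kahler g \<longleftrightarrow> fst g > - snd g \<and> - snd g > 0"

definition nef :: "cls \<Rightarrow> bool" where
  "nef g \<longleftrightarrow> fst g \<ge> - snd g \<and> - snd g \<ge> 0"

text \<open>Big cone: interior of the pseudo-effective cone, which is spanned by
  [E] and [H]-[E]; i.e. x[H] - y[E] with x > 0 and x > y.\<close>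
definition big :: "cls \<Rightarrow> bool" where
  "big g \<longleftrightarrow> fst g > 0 \<and> fst g > - snd g"

text \<open>Classes of irreducible curves on Bl_{x0} P^2: the exceptional curve E, and
  strict transforms of irreducible plane curves of degree d \<ge> 1 with multiplicity
  m at x0 (0 \<le> m \<le> d-1, or the lines through x0: d = m = 1), of class d[H] - m[E].\<close>
definition curve_class :: "cls \<Rightarrow> bool" where
  "curve_class z \<longleftrightarrow> z = clsE \<or>
     (\<exists>d m :: nat. d \<ge> 1 \<and> (m < d \<or> (d = 1 \<and> m = 1)) \<and>
        z = (real d, - real m))"

definition dhym_cot :: "cls \<Rightarrow> cls \<Rightarrow> real" where
  "dhym_cot \<alpha> \<beta> = (inter \<alpha> \<alpha> - inter \<beta> \<beta>) / (2 * inter \<alpha> \<beta>)"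

text \<open>On a surface: Re(alpha + i beta).gamma = alpha.gamma, Im = beta.gamma (k = 1);
  Re(alpha + i beta)^2 = alpha^2 - beta^2, Im = 2 alpha.beta (k = 2, gamma^0 = 1).\<close>
definition dhym_stable :: "cls \<Rightarrow> cls \<Rightarrow> bool" where
  "dhym_stable \<alpha> \<beta> \<longleftrightarrow> inter \<alpha> \<beta> \<noteq> 0 \<and>
     (\<forall>\<gamma>. kahler \<gamma> \<longrightarrow>
        inter \<alpha> \<gamma> \<ge> dhym_cot \<alpha> \<beta> * inter \<beta> \<gamma> \<and>
        inter \<alpha> \<alpha> - inter \<beta> \<beta> \<ge> dhym_cot \<alpha> \<beta> * (2 * inter \<alpha> \<beta>)) \<and>
     (\<forall>Z. curve_class Z \<longrightarrow> inter \<alpha> Z > dhym_cot \<alpha> \<beta> * inter \<beta> Z)"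

definition dhym_semistable :: "cls \<Rightarrow> cls \<Rightarrow> bool" where
  "dhym_semistable \<alpha> \<beta> \<longleftrightarrow> inter \<alpha> \<beta> \<noteq> 0 \<and>
     (\<forall>\<gamma>. kahler \<gamma> \<longrightarrow>
        inter \<alpha> \<gamma> \<ge> dhym_cot \<alpha> \<beta> * inter \<beta> \<gamma> \<and>
        inter \<alpha> \<alpha> - inter \<beta> \<beta> \<ge> dhym_cot \<alpha> \<beta> * (2 * inter \<alpha> \<beta>)) \<and>
     (\<forall>Z. curve_class Z \<longrightarrow> inter \<alpha> Z \<ge> dhym_cot \<alpha> \<beta> * inter \<beta> Z)"

end

theory Submission
  imports Defs
begin

text \<open>After clearing the positive denominator
  2(pb - s), each of the three bounds on c says that an explicit sum of squares is positive,
  and the first two say precisely that \<alpha> - c\<beta> = (p - cb)[H] - (s - c)[E] is big.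
  A big class on the blow-up pairs positively with every nonzero nef class, hence with every
  Kahler class and with every irreducible curve other than E. So dHYM (semi-)stability reduces
  to the single inequality for E, namely s > c (s \<ge> c), which is also the Kahler (nef)
  condition for \<alpha> - c\<beta>.\<close>

definition cot_tilde :: "real \<Rightarrow> real \<Rightarrow> real \<Rightarrow> real" where
  "cot_tilde b p s = (p\<^sup>2 - s\<^sup>2 - b\<^sup>2 + 1) / (2 * (p * b - s))"

lemma cot_tilde_less_iff:
  assumes "s < p * b"
  shows "cot_tilde b p s < q \<longleftrightarrow> p\<^sup>2 - s\<^sup>2 - b\<^sup>2 + 1 < 2 * (p * b - s) * q"
  using assms by (simp add: cot_tilde_def pos_divide_less_eq mult.commute)

lemma cot_tilde_less_div:
  assumes "b > 1" and "s < p * b"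
  shows "cot_tilde b p s < p / b"
proof -
  have "2 * (p * b - s) * (p / b) - (p\<^sup>2 - s\<^sup>2 - b\<^sup>2 + 1)
      = ((p - s)\<^sup>2 + (b - 1) * (p\<^sup>2 + s\<^sup>2) + b * (b\<^sup>2 - 1)) / b"
    using assms(1) by (simp add: field_simps power2_eq_square)
  also have "\<dots> > 0"
    using assms(1) by (simp add: add_nonneg_pos)
  finally show ?thesis
    unfolding cot_tilde_less_iff[OF assms(2)] by linarith
qed

lemma cot_tilde_less_diff_div:
  assumes "b > 1" and "s < p * b"
  shows "cot_tilde b p s < (p - s) / (b - 1)"
proof -
  have "2 * (p * b - s) * ((p - s) / (b - 1)) - (p\<^sup>2 - s\<^sup>2 - b\<^sup>2 + 1)
      = (b + 1) * ((p - s)\<^sup>2 + (b - 1)\<^sup>2) / (b - 1)"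
    using assms(1) by (simp add: field_simps power2_eq_square)
  also have "\<dots> > 0"
    using assms(1) by (simp add: add_nonneg_pos)
  finally show ?thesis
    unfolding cot_tilde_less_iff[OF assms(2)] by linarith
qed

lemma cot_tilde_less_mult:
  assumes "b > 1" and "s < p * b"
  shows "cot_tilde b p s < b * p"
proof -
  have "2 * (p * b - s) * (b * p) - (p\<^sup>2 - s\<^sup>2 - b\<^sup>2 + 1)
      = (b * p - s)\<^sup>2 + (b\<^sup>2 - 1) * (p\<^sup>2 + 1)"
    by (simp add: algebra_simps power2_eq_square)
  also have "\<dots> > 0"
    using assms(1) by (simp add: add_nonneg_pos)
  finally show ?thesis
    unfolding cot_tilde_less_iff[OF assms(2)] by linarith
qed

lemma inter_diff_scaleR_left: "inter (x - c *\<^sub>R y) z = inter x z - c * inter y z"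
  by (simp add: inter_def algebra_simps)

lemma inter_clsE_right: "inter g clsE = - snd g"
  by (simp add: inter_def clsE_def)

lemma kahler_iff_of_big: "big g \<Longrightarrow> kahler g \<longleftrightarrow> snd g < 0"
  by (auto simp: big_def kahler_def)

lemma nef_iff_of_big: "big g \<Longrightarrow> nef g \<longleftrightarrow> snd g \<le> 0"
  by (auto simp: big_def nef_def)

lemma nef_if_kahler: "kahler g \<Longrightarrow> nef g"
  by (simp add: kahler_def nef_def)

lemma curve_class_nef:
  assumes "curve_class Z" and "Z \<noteq> clsE"
  shows "nef Z" and "Z \<noteq> 0"
proof -
  from assms obtain d m :: nat where "d \<ge> 1" "m \<le> d" "Z = (real d, - real m)"
    unfolding curve_class_def by (metis le_refl less_imp_le_nat)
  then show "nef Z" and "Z \<noteq> 0"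
    by (auto simp: nef_def zero_prod_def)
qed

lemma inter_pos_if_big_nef:
  assumes "big g" and "nef z" and "z \<noteq> 0"
  shows "inter g z > 0"
proof -
  obtain u v x y where g: "g = (u, - v)" and z: "z = (x, - y)"
    by (metis minus_minus prod.collapse)
  have "u > 0" "u > v" using assms(1) by (auto simp: big_def g)
  moreover have "x \<ge> y" "y \<ge> 0" "x > 0"
    using assms(2,3) by (auto simp: nef_def z zero_prod_def)
  ultimately have "u * x > v * y"
  proof (cases "v \<le> 0")
    case True
    then have "v * y \<le> 0" using \<open>y \<ge> 0\<close> by (simp add: mult_nonpos_nonneg)
    also have "\<dots> < u * x" using \<open>u > 0\<close> \<open>x > 0\<close> by simp
    finally show ?thesis .
  next
    case False
    then have "v * y \<le> v * x" using \<open>x \<ge> y\<close> by simp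
    also have "\<dots> < u * x" using \<open>u > v\<close> \<open>x > 0\<close> by simp
    finally show ?thesis .
  qed
  then show ?thesis by (simp add: inter_def g z)
qed

lemma dhym_kahler_conditions:
  assumes "inter \<alpha> \<beta> \<noteq> 0" and "big (\<alpha> - dhym_cot \<alpha> \<beta> *\<^sub>R \<beta>)" and "kahler \<gamma>"
  shows "inter \<alpha> \<gamma> \<ge> dhym_cot \<alpha> \<beta> * inter \<beta> \<gamma>"
    and "inter \<alpha> \<alpha> - inter \<beta> \<beta> \<ge> dhym_cot \<alpha> \<beta> * (2 * inter \<alpha> \<beta>)"
proof -
  have "\<gamma> \<noteq> 0" using assms(3) by (auto simp: kahler_def)
  then have "inter (\<alpha> - dhym_cot \<alpha> \<beta> *\<^sub>R \<beta>) \<gamma> > 0"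
    using assms(2,3) nef_if_kahler inter_pos_if_big_nef by blast
  then show "inter \<alpha> \<gamma> \<ge> dhym_cot \<alpha> \<beta> * inter \<beta> \<gamma>"
    by (simp add: inter_diff_scaleR_left)
  show "inter \<alpha> \<alpha> - inter \<beta> \<beta> \<ge> dhym_cot \<alpha> \<beta> * (2 * inter \<alpha> \<beta>)"
    using assms(1) by (simp add: dhym_cot_def)
qed

lemma dhym_curve_condition:
  assumes "big (\<alpha> - dhym_cot \<alpha> \<beta> *\<^sub>R \<beta>)" and "curve_class Z" and "Z \<noteq> clsE"
  shows "inter \<alpha> Z > dhym_cot \<alpha> \<beta> * inter \<beta> Z"
  using inter_pos_if_big_nef[OF assms(1) curve_class_nef[OF assms(2,3)]]
  by (simp add: inter_diff_scaleR_left)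

lemma dhym_stable_iff_kahler:
  assumes "inter \<alpha> \<beta> \<noteq> 0" and big: "big (\<alpha> - dhym_cot \<alpha> \<beta> *\<^sub>R \<beta>)"
  shows "dhym_stable \<alpha> \<beta> \<longleftrightarrow> kahler (\<alpha> - dhym_cot \<alpha> \<beta> *\<^sub>R \<beta>)"
proof -
  have "inter \<alpha> clsE > dhym_cot \<alpha> \<beta> * inter \<beta> clsE \<longleftrightarrow> kahler (\<alpha> - dhym_cot \<alpha> \<beta> *\<^sub>R \<beta>)"
    using kahler_iff_of_big[OF big] inter_diff_scaleR_left[of \<alpha> _ \<beta> clsE]
    by (simp add: inter_clsE_right)
  moreover have "curve_class clsE" by (simp add: curve_class_def)
  ultimately show ?thesis
    using assms dhym_kahler_conditions dhym_curve_condition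
    unfolding dhym_stable_def by metis
qed

lemma dhym_semistable_iff_nef:
  assumes "inter \<alpha> \<beta> \<noteq> 0" and big: "big (\<alpha> - dhym_cot \<alpha> \<beta> *\<^sub>R \<beta>)"
  shows "dhym_semistable \<alpha> \<beta> \<longleftrightarrow> nef (\<alpha> - dhym_cot \<alpha> \<beta> *\<^sub>R \<beta>)"
proof -
  have "inter \<alpha> clsE \<ge> dhym_cot \<alpha> \<beta> * inter \<beta> clsE \<longleftrightarrow> nef (\<alpha> - dhym_cot \<alpha> \<beta> *\<^sub>R \<beta>)"
    using nef_iff_of_big[OF big] inter_diff_scaleR_left[of \<alpha> _ \<beta> clsE]
    by (simp add: inter_clsE_right)
  moreover have "curve_class clsE" by (simp add: curve_class_def)
  ultimately show ?thesis
    using assms dhym_kahler_conditions dhym_curve_condition less_imp_le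
    unfolding dhym_semistable_def by metis
qed

theorem lemma4p4:
  fixes b p s :: real
  assumes "b > 1" and "s < p * b"
  defines "\<beta> \<equiv> b *\<^sub>R clsH - clsE"
      and "\<alpha> \<equiv> p *\<^sub>R clsH - s *\<^sub>R clsE"
      and "c \<equiv> (p\<^sup>2 - s\<^sup>2 - b\<^sup>2 + 1) / (2 * (p * b - s))"
  shows "c = (inter \<alpha> \<alpha> - inter \<beta> \<beta>) / (2 * inter \<alpha> \<beta>)
    \<and> c < min (p / b) (min ((p - s) / (b - 1)) (b * p))
    \<and> big (\<alpha> - c *\<^sub>R \<beta>)
    \<and> (kahler (\<alpha> - c *\<^sub>R \<beta>) \<longleftrightarrow> s > c)
    \<and> (nef (\<alpha> - c *\<^sub>R \<beta>) \<longleftrightarrow> s \<ge> c)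
    \<and> (dhym_stable \<alpha> \<beta> \<longleftrightarrow> s > c)
    \<and> (dhym_semistable \<alpha> \<beta> \<longleftrightarrow> s \<ge> c)"
proof -
  have \<alpha>: "\<alpha> = (p, - s)" and \<beta>: "\<beta> = (b, - 1)"
    by (simp_all add: \<alpha>_def \<beta>_def clsH_def clsE_def)
  have "inter \<alpha> \<beta> = p * b - s" by (simp add: \<alpha> \<beta> inter_def)
  then have inter_ne: "inter \<alpha> \<beta> \<noteq> 0" using assms(2) by simp
  have c_eq: "c = (inter \<alpha> \<alpha> - inter \<beta> \<beta>) / (2 * inter \<alpha> \<beta>)"
    by (simp add: \<alpha> \<beta> inter_def c_def power2_eq_square)
  then have cot: "dhym_cot \<alpha> \<beta> = c" by (simp add: dhym_cot_def)
  have "c = cot_tilde b p s" by (simp add: c_def cot_tilde_def)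
  then have bounds: "c < p / b" "c < (p - s) / (b - 1)" "c < b * p"
    using assms(1,2) cot_tilde_less_div cot_tilde_less_diff_div cot_tilde_less_mult by auto
  then have "c * b < p" "c * (b - 1) < p - s"
    using assms(1) by (simp_all add: pos_less_divide_eq)
  moreover have g: "\<alpha> - c *\<^sub>R \<beta> = (p - c * b, c - s)" by (simp add: \<alpha> \<beta>)
  ultimately have big: "big (\<alpha> - c *\<^sub>R \<beta>)" by (simp add: big_def algebra_simps)
  have kahler: "kahler (\<alpha> - c *\<^sub>R \<beta>) \<longleftrightarrow> s > c"
    using kahler_iff_of_big[OF big] by (simp add: g)
  have nef: "nef (\<alpha> - c *\<^sub>R \<beta>) \<longleftrightarrow> s \<ge> c"
    using nef_iff_of_big[OF big] by (simp add: g)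
  have "c < min (p / b) (min ((p - s) / (b - 1)) (b * p))"
    using bounds by simp
  then show ?thesis
    using c_eq big kahler nef
      dhym_stable_iff_kahler[OF inter_ne] dhym_semistable_iff_nef[OF inter_ne]
    unfolding cot by blast
qed

end
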